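(* Let $1\to N\to G\to\Gamma\to1$ be a short exact sequence of finite groups, with $N\lhd G$ and $\Gamma=G/N$. Then $\mathcal{K}_r^S(G/N)=1$ in the Burnside ring $\Omega(G)$ if and only if, for every prime $p$, the sequence of Sylow subgroups $1\to N_p\to G_p\to\Gamma_p\to1$ splits.
   Context: For a prime $p$ and a Sylow $p$-subgroup $G_p$ of $G$, $N_p=N\cap G_p$ and $\Gamma_p=(G_pN)/N$; a sequence $1\to A\to B\to B/A\to1$ splits if $A$ has a complement in $B$. $\Omega(G)$ is the Burnside ring of $G$ (Grothendieck ring of finite $G$-sets under disjoint union and Cartesian product), with dimension homomorphism $\alpha(X)=|X|$ and regular element $r=G/\{e\}$. $S=\{G/H_1,\dots,G/H_n\}$ where $H_1,\dots,H_n$ is a full set of representatives of the conjugacy classes of subgroups of $G$. For $x\in\Omega(G)$, $S(x)=\{s\in S: s\cdot x\in\mathbb{Z}r\}$, $\mathrm{Ind}(x)=\{m\in\mathbb{Z}: s\cdot x=m r \text{ for some } s\in S(x)\}$, and $\mathcal{K}_r^S(x)=\gcd(\mathrm{Ind}(x))$ (with $\mathcal{K}_r^S(x)=\infty$ if $S(x)=\emptyset$). *)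

theory Defs
  imports "HOL-Algebra.Algebra"
begin

definition gset :: "('a, 'b) monoid_scheme \<Rightarrow> 'x set \<Rightarrow> ('a \<Rightarrow> 'x \<Rightarrow> 'x) \<Rightarrow> bool" where
  "gset G U act \<longleftrightarrow> finite U
     \<and> (\<forall>g\<in>carrier G. \<forall>x\<in>U. act g x \<in> U)
     \<and> (\<forall>x\<in>U. act (monoid.one G) x = x)
     \<and> (\<forall>g\<in>carrier G. \<forall>h\<in>carrier G. \<forall>x\<in>U. act (monoid.mult G g h) x = act g (act h x))"

definition gset_iso ::
  "('a, 'b) monoid_scheme \<Rightarrow> 'x set \<Rightarrow> ('a \<Rightarrow> 'x \<Rightarrow> 'x) \<Rightarrow> 'y set \<Rightarrow> ('a \<Rightarrow> 'y \<Rightarrow> 'y) \<Rightarrow> bool" where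
  "gset_iso G U \<alpha> V \<beta> \<longleftrightarrow>
     (\<exists>f. bij_betw f U V \<and> (\<forall>g\<in>carrier G. \<forall>x\<in>U. f (\<alpha> g x) = \<beta> g (f x)))"

definition coset_space :: "('a, 'b) monoid_scheme \<Rightarrow> 'a set \<Rightarrow> 'a set set" where
  "coset_space G H = {l_coset G a H | a. a \<in> carrier G}"

definition coset_act :: "('a, 'b) monoid_scheme \<Rightarrow> 'a \<Rightarrow> 'a set \<Rightarrow> 'a set" where
  "coset_act G g C = l_coset G g C"

text \<open>Cartesian product of G-sets (diagonal action): the product in the Burnside ring.\<close>
definition prod_act :: "('a \<Rightarrow> 'x \<Rightarrow> 'x) \<Rightarrow> ('a \<Rightarrow> 'y \<Rightarrow> 'y) \<Rightarrow> 'a \<Rightarrow> 'x \<times> 'y \<Rightarrow> 'x \<times> 'y" where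
  "prod_act \<alpha> \<beta> g = (\<lambda>(x, y). (\<alpha> g x, \<beta> g y))"

text \<open>Disjoint union of G-sets: the sum in the Burnside ring.\<close>
definition sum_set :: "'x set \<Rightarrow> 'y set \<Rightarrow> ('x + 'y) set" where
  "sum_set U V = Inl ` U \<union> Inr ` V"

definition sum_act :: "('a \<Rightarrow> 'x \<Rightarrow> 'x) \<Rightarrow> ('a \<Rightarrow> 'y \<Rightarrow> 'y) \<Rightarrow> 'a \<Rightarrow> 'x + 'y \<Rightarrow> 'x + 'y" where
  "sum_act \<alpha> \<beta> g = case_sum (\<lambda>x. Inl (\<alpha> g x)) (\<lambda>y. Inr (\<beta> g y))"

text \<open>n copies of the regular G-set r = G/{e}, i.e. the G-set representing n * r.\<close>
definition reg_copies :: "('a, 'b) monoid_scheme \<Rightarrow> nat \<Rightarrow> (nat \<times> 'a) set" where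
  "reg_copies G n = {0..<n} \<times> carrier G"

definition reg_act :: "('a, 'b) monoid_scheme \<Rightarrow> 'a \<Rightarrow> nat \<times> 'a \<Rightarrow> nat \<times> 'a" where
  "reg_act G g = (\<lambda>(i, h). (i, monoid.mult G g h))"

text \<open>Omega(G) is the Grothendieck ring of finite G-sets. For a finite G-set X and an integer m,
  the equation [X] = m r holds in Omega(G) iff (Grothendieck group relation) there is a finite
  G-set Z with X + Z = m r + Z (for m >= 0), resp. X + |m| r + Z = Z (for m < 0), as G-sets up to
  isomorphism. The auxiliary G-set Z is taken on the carrier type nat * 'a set, which suffices
  since every finite G-set is isomorphic to a disjoint union of coset spaces.\<close>
definition burnside_eq_mult_reg ::
  "('a, 'b) monoid_scheme \<Rightarrow> 'x set \<Rightarrow> ('a \<Rightarrow> 'x \<Rightarrow> 'x) \<Rightarrow> int \<Rightarrow> bool" where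
  "burnside_eq_mult_reg G U \<alpha> m \<longleftrightarrow>
     (\<exists>(W :: (nat \<times> 'a set) set) \<zeta>. gset G W \<zeta> \<and>
        (if 0 \<le> m then
           gset_iso G (sum_set U W) (sum_act \<alpha> \<zeta>)
                      (sum_set (reg_copies G (nat m)) W) (sum_act (reg_act G) \<zeta>)
         else
           gset_iso G (sum_set (sum_set U (reg_copies G (nat (- m)))) W)
                      (sum_act (sum_act \<alpha> (reg_act G)) \<zeta>) W \<zeta>))"

definition conj_class_reps :: "('a, 'b) monoid_scheme \<Rightarrow> 'a set set \<Rightarrow> bool" where
  "conj_class_reps G Hs \<longleftrightarrow> (\<forall>H\<in>Hs. subgroup H G) \<and>
     (\<forall>K. subgroup K G \<longrightarrow>
        (\<exists>!H. H \<in> Hs \<and> (\<exists>g\<in>carrier G. K = r_coset G (l_coset G g H) (m_inv G g))))"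

text \<open>For a G-set x = (X, alpha), with S = {G/H : H in Hs}:
  S(x) = {H in Hs. G/H * x in Z r}, Ind(x) = {m. G/H * x = m r for some H in S(x)}.\<close>
definition S_of ::
  "('a, 'b) monoid_scheme \<Rightarrow> 'a set set \<Rightarrow> 'x set \<Rightarrow> ('a \<Rightarrow> 'x \<Rightarrow> 'x) \<Rightarrow> 'a set set" where
  "S_of G Hs U \<alpha> = {H \<in> Hs. \<exists>m. burnside_eq_mult_reg G (coset_space G H \<times> U) (prod_act (coset_act G) \<alpha>) m}"

definition Ind_of ::
  "('a, 'b) monoid_scheme \<Rightarrow> 'a set set \<Rightarrow> 'x set \<Rightarrow> ('a \<Rightarrow> 'x \<Rightarrow> 'x) \<Rightarrow> int set" where
  "Ind_of G Hs U \<alpha> = {m. \<exists>H \<in> S_of G Hs U \<alpha>.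
       burnside_eq_mult_reg G (coset_space G H \<times> U) (prod_act (coset_act G) \<alpha>) m}"

text \<open>K_r^S(x) = gcd(Ind(x)), with None standing for infinity when S(x) is empty.\<close>
definition K_rS ::
  "('a, 'b) monoid_scheme \<Rightarrow> 'a set set \<Rightarrow> 'x set \<Rightarrow> ('a \<Rightarrow> 'x \<Rightarrow> 'x) \<Rightarrow> int option" where
  "K_rS G Hs U \<alpha> = (if S_of G Hs U \<alpha> = {} then None else Some (Gcd (Ind_of G Hs U \<alpha>)))"

definition sylow_subgroup :: "('a, 'b) monoid_scheme \<Rightarrow> nat \<Rightarrow> 'a set \<Rightarrow> bool" where
  "sylow_subgroup G p P \<longleftrightarrow> subgroup P G \<and> card P = p ^ multiplicity p (order G)"

text \<open>The sequence 1 -> A -> B -> B/A -> 1 (A normal in B, both subgroups of G) splits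
  iff A has a complement in B.\<close>
definition has_complement :: "('a, 'b) monoid_scheme \<Rightarrow> 'a set \<Rightarrow> 'a set \<Rightarrow> bool" where
  "has_complement G A B \<longleftrightarrow>
     (\<exists>K. subgroup K G \<and> K \<subseteq> B \<and> K \<inter> A = {monoid.one G} \<and> set_mult G A K = B)"

end

theory Submission
  imports Defs
begin

(* For subgroups H and N of G with N normal, the stabiliser of (aH, bN) in G/H \<times> G/N is
   aHa\<inverse> \<inter> N = a(H \<inter> N)a\<inverse>, so this G-set is free exactly when H \<inter> N = 1.  A finite G-set
   equals m r in the Burnside ring iff it is free of size m |G|: an isomorphism of G-sets
   preserves the number of points fixed by each g, the regular G-set has none for g \<noteq> 1, and a
   free G-set is a disjoint union of regular orbits.  Hence Ind(G/N) consists of the numbers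
   |G| / (|H| |N|) with H \<inter> N = 1, and their gcd is 1 iff for every prime p some such H has
   |P| dividing |H| |N|, P a Sylow p-subgroup.  If K complements N \<inter> P in P, then
   |P| = |N \<inter> P| |K| divides |N| |K|.  Conversely, a p-group acting on a set of size prime to p
   has a fixed point, so Sylow p-subgroups of H and of N are conjugate into P; the conjugate K
   of the former meets N trivially, and comparing orders shows (N \<inter> P) K = P. *)

section \<open>Finite G-sets and the Burnside ring\<close>

definition free_action :: "('a, 'b) monoid_scheme \<Rightarrow> 'x set \<Rightarrow> ('a \<Rightarrow> 'x \<Rightarrow> 'x) \<Rightarrow> bool" where
  "free_action G U \<alpha> \<longleftrightarrow> (\<forall>g\<in>carrier G. \<forall>x\<in>U. \<alpha> g x = x \<longrightarrow> g = \<one>\<^bsub>G\<^esub>)"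

lemma sum_set_eq_Plus: "sum_set U V = U <+> V"
  by (simp add: sum_set_def Plus_def)

lemma bij_betw_map_sum_id:
  assumes "bij_betw f U V"
  shows "bij_betw (map_sum f id) (U <+> W) (V <+> W)"
proof (rule bij_betw_imageI)
  show "inj_on (map_sum f id) (U <+> W)"
  proof (rule inj_onI)
    fix x y assume "x \<in> U <+> W" "y \<in> U <+> W" "map_sum f id x = map_sum f id y"
    then show "x = y"
      using bij_betw_imp_inj_on[OF assms] by (auto simp: Plus_def dest: inj_onD)
  qed
  show "map_sum f id ` (U <+> W) = V <+> W"
    unfolding bij_betw_imp_surj_on[OF assms, symmetric] Plus_def by (simp add: image_Un image_image)
qed

lemma (in group) gset_group_action:
  assumes U: "gset G U \<alpha>"
  shows "group_action G U (\<lambda>g. restrict (\<alpha> g) U)"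
proof -
  have closed: "\<alpha> g x \<in> U" if "g \<in> carrier G" "x \<in> U" for g x
    using U that by (simp add: gset_def)
  have one: "\<alpha> \<one> x = x" if "x \<in> U" for x
    using U that by (simp add: gset_def)
  have mult: "\<alpha> (g \<otimes> h) x = \<alpha> g (\<alpha> h x)" if "g \<in> carrier G" "h \<in> carrier G" "x \<in> U" for g h x
    using U that by (simp add: gset_def)
  have bij: "restrict (\<alpha> g) U \<in> carrier (BijGroup U)" if g: "g \<in> carrier G" for g
  proof -
    have "bij_betw (\<alpha> g) U U"
      by (rule bij_betwI[where g = "\<alpha> (inv g)"])
        (use g closed in auto, use g one mult[of "inv g" g] mult[of g "inv g"] in auto)
    then show ?thesis
      by (simp add: BijGroup_def Bij_def bij_betw_def inj_on_def)
  qed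
  show ?thesis
    unfolding group_action_def group_hom_def group_hom_axioms_def
  proof (intro conjI homI)
    show "restrict (\<alpha> (g \<otimes> h)) U = restrict (\<alpha> g) U \<otimes>\<^bsub>BijGroup U\<^esub> restrict (\<alpha> h) U"
      if "g \<in> carrier G" "h \<in> carrier G" for g h
      using bij that by (auto simp: BijGroup_def compose_def mult closed)
  qed (use is_group group_BijGroup bij in auto)
qed

lemma gset_subgroup:
  assumes "gset G U \<alpha>" and "subgroup H G"
  shows "gset (G\<lparr>carrier := H\<rparr>) U \<alpha>"
  using assms subgroup.subset[OF assms(2)] unfolding gset_def by (simp add: subset_iff)

lemma gset_prod:
  assumes "gset G U \<alpha>" and "gset G V \<beta>"
  shows "gset G (U \<times> V) (prod_act \<alpha> \<beta>)"
  using assms by (auto simp: gset_def prod_act_def)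

lemma gset_sum:
  assumes "gset G U \<alpha>" and "gset G V \<beta>"
  shows "gset G (sum_set U V) (sum_act \<alpha> \<beta>)"
  using assms by (auto simp: gset_def sum_set_eq_Plus sum_act_def)

lemma (in group) gset_reg_copies:
  assumes "finite (carrier G)"
  shows "gset G (reg_copies G n) (reg_act G)"
  using assms by (auto simp: gset_def reg_copies_def reg_act_def m_assoc)

lemma card_reg_copies: "card (reg_copies G n) = n * order G"
  by (simp add: reg_copies_def card_cartesian_product order_def)

lemma invariants_sum_set:
  "invariants (sum_set U V) (sum_act \<alpha> \<beta>) g = invariants U \<alpha> g <+> invariants V \<beta> g"
  by (auto simp: invariants_def sum_set_eq_Plus sum_act_def)

lemma (in group) invariants_reg_copies:
  assumes "g \<in> carrier G" and "g \<noteq> \<one>"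
  shows "invariants (reg_copies G n) (reg_act G) g = {}"
  using assms by (auto simp: invariants_def reg_copies_def reg_act_def)

lemma gset_iso_sym:
  assumes U: "gset G U \<alpha>" and iso: "gset_iso G U \<alpha> V \<beta>"
  shows "gset_iso G V \<beta> U \<alpha>"
proof -
  obtain f where f: "bij_betw f U V"
    and equiv: "\<And>g x. g \<in> carrier G \<Longrightarrow> x \<in> U \<Longrightarrow> f (\<alpha> g x) = \<beta> g (f x)"
    using iso by (auto simp: gset_iso_def)
  have "inv_into U f (\<beta> g y) = \<alpha> g (inv_into U f y)" if g: "g \<in> carrier G" and y: "y \<in> V" for g y
  proof -
    obtain x where x: "x \<in> U" "y = f x" using f y by (auto simp: bij_betw_def)
    have "\<alpha> g x \<in> U" using U g x by (simp add: gset_def)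
    then have "inv_into U f (\<beta> g y) = \<alpha> g x"
      using equiv[OF g x(1)] x f by (metis bij_betw_imp_inj_on inv_into_f_f)
    also have "\<dots> = \<alpha> g (inv_into U f y)"
      using x f by (simp add: bij_betw_imp_inj_on)
    finally show ?thesis .
  qed
  then show ?thesis
    using bij_betw_inv_into[OF f] by (auto simp: gset_iso_def)
qed

lemma gset_iso_sum_set:
  assumes "gset_iso G U \<alpha> V \<beta>"
  shows "gset_iso G (sum_set U W) (sum_act \<alpha> \<zeta>) (sum_set V W) (sum_act \<beta> \<zeta>)"
proof -
  obtain f where f: "bij_betw f U V" and equiv: "\<forall>g\<in>carrier G. \<forall>x\<in>U. f (\<alpha> g x) = \<beta> g (f x)"
    using assms by (auto simp: gset_iso_def)
  have "\<forall>g\<in>carrier G. \<forall>s\<in>U <+> W. map_sum f id (sum_act \<alpha> \<zeta> g s) = sum_act \<beta> \<zeta> g (map_sum f id s)"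
    using equiv by (auto simp: sum_act_def)
  then show ?thesis
    unfolding gset_iso_def sum_set_eq_Plus using bij_betw_map_sum_id[OF f] by blast
qed

lemma gset_iso_card_invariants:
  assumes U: "gset G U \<alpha>" and iso: "gset_iso G U \<alpha> V \<beta>" and g: "g \<in> carrier G"
  shows "card (invariants U \<alpha> g) = card (invariants V \<beta> g)"
proof -
  obtain f where f: "bij_betw f U V" and equiv: "\<And>x. x \<in> U \<Longrightarrow> f (\<alpha> g x) = \<beta> g (f x)"
    using iso g by (auto simp: gset_iso_def)
  have "f ` invariants U \<alpha> g = invariants V \<beta> g"
  proof
    show "f ` invariants U \<alpha> g \<subseteq> invariants V \<beta> g"
    proof
      fix y assume "y \<in> f ` invariants U \<alpha> g"
      then obtain x where x: "x \<in> U" "\<alpha> g x = x" "y = f x" by (auto simp: invariants_def)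
      then show "y \<in> invariants V \<beta> g"
        using f equiv[OF x(1)] by (auto simp: invariants_def bij_betw_def)
    qed
    show "invariants V \<beta> g \<subseteq> f ` invariants U \<alpha> g"
    proof
      fix y assume y: "y \<in> invariants V \<beta> g"
      then obtain x where x: "x \<in> U" "y = f x" using f by (auto simp: invariants_def bij_betw_def)
      have "f (\<alpha> g x) = f x" using y x equiv by (simp add: invariants_def)
      moreover have "\<alpha> g x \<in> U" using U g x by (simp add: gset_def)
      ultimately have "\<alpha> g x = x" using f x by (meson bij_betw_imp_inj_on inj_onD)
      then show "y \<in> f ` invariants U \<alpha> g" using x by (auto simp: invariants_def)
    qed
  qed
  moreover have "inj_on f (invariants U \<alpha> g)"
    using f by (auto simp: bij_betw_def invariants_def inj_on_def)
  ultimately show ?thesis by (metis card_image)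
qed

lemma (in group) gset_orbit_transversal:
  fixes U :: "'x set"
  assumes U: "gset G U \<alpha>"
  shows "\<exists>R\<subseteq>U. \<forall>x\<in>U. \<exists>!r. r \<in> R \<and> (\<exists>g\<in>carrier G. x = \<alpha> g r)"
proof -
  define \<phi> where "\<phi> g = restrict (\<alpha> g) U" for g
  interpret group_action G U \<phi>
    unfolding \<phi>_def by (rule gset_group_action[OF U])
  interpret partition U "orbits G U \<phi>"
    by (rule orbit_partition)
  have orbit_iff: "x \<in> orbit G \<phi> r \<longleftrightarrow> (\<exists>g\<in>carrier G. x = \<alpha> g r)" if "r \<in> U" for x r
    using that by (auto simp: orbit_def \<phi>_def)
  define rep where "rep C = (SOME r. r \<in> C)" for C :: "'x set"
  have rep: "rep C \<in> C" if "C \<in> orbits G U \<phi>" for C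
    using that orbit_refl unfolding rep_def orbits_def by (metis (mono_tags, lifting) mem_Collect_eq)
  have orbit_rep: "orbit G \<phi> (rep C) = C" if C: "C \<in> orbits G U \<phi>" for C
  proof -
    have "rep C \<in> U" using incl[OF C] rep[OF C] by blast
    then have "orbit G \<phi> (rep C) \<in> orbits G U \<phi>" "rep C \<in> orbit G \<phi> (rep C)"
      by (auto simp: orbits_def orbit_refl)
    then show ?thesis
      using unique_class[OF \<open>rep C \<in> U\<close>] rep[OF C] C by blast
  qed
  define R where "R = rep ` orbits G U \<phi>"
  have "R \<subseteq> U" using rep incl by (auto simp: R_def)
  moreover have "\<forall>x\<in>U. \<exists>!r. r \<in> R \<and> (\<exists>g\<in>carrier G. x = \<alpha> g r)"
  proof (intro ballI)
    fix x assume x: "x \<in> U"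
    obtain C where C: "C \<in> orbits G U \<phi>" "x \<in> C"
      and uniq: "\<And>C'. C' \<in> orbits G U \<phi> \<Longrightarrow> x \<in> C' \<Longrightarrow> C' = C"
      using unique_class[OF x] by blast
    have rep_C: "rep C \<in> R" using C(1) by (simp add: R_def)
    show "\<exists>!r. r \<in> R \<and> (\<exists>g\<in>carrier G. x = \<alpha> g r)"
    proof (rule ex1I)
      show "rep C \<in> R \<and> (\<exists>g\<in>carrier G. x = \<alpha> g (rep C))"
        using rep_C C orbit_rep[OF C(1)] orbit_iff[of "rep C" x] \<open>R \<subseteq> U\<close> by blast
      show "r = rep C" if r: "r \<in> R \<and> (\<exists>g\<in>carrier G. x = \<alpha> g r)" for r
      proof -
        obtain C' where C': "C' \<in> orbits G U \<phi>" "r = rep C'" using r by (auto simp: R_def)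
        moreover have "r \<in> U" using r \<open>R \<subseteq> U\<close> by blast
        ultimately have "x \<in> C'" using r orbit_rep[OF C'(1)] orbit_iff[of r x] by simp
        then show ?thesis using uniq C' by auto
      qed
    qed
  qed
  ultimately show ?thesis by (intro exI[of _ R] conjI)
qed

lemma (in group) free_action_cancel:
  assumes U: "gset G U \<alpha>" and free: "free_action G U \<alpha>"
    and x: "x \<in> U" and g: "g \<in> carrier G" and h: "h \<in> carrier G" and eq: "\<alpha> g x = \<alpha> h x"
  shows "g = h"
proof -
  have mult: "\<alpha> (g' \<otimes> h') x = \<alpha> g' (\<alpha> h' x)" if "g' \<in> carrier G" "h' \<in> carrier G" for g' h'
    using U x that by (simp add: gset_def)
  have "\<alpha> (inv h \<otimes> g) x = \<alpha> (inv h) (\<alpha> h x)"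
    using mult eq g h by simp
  also have "\<dots> = x"
    using U h x mult[of "inv h" h] by (simp add: gset_def)
  finally have "inv h \<otimes> g = \<one>"
    using free g h x by (auto simp: free_action_def)
  then show "g = h"
    using g h inv_solve_left[of \<one> h g] by auto
qed

lemma (in group) free_gset_iso_reg_copies:
  fixes U :: "'x set"
  assumes U: "gset G U \<alpha>" and free: "free_action G U \<alpha>"
  shows "\<exists>k. gset_iso G (reg_copies G k) (reg_act G) U \<alpha>"
proof -
  obtain R where "R \<subseteq> U" and transversal: "\<forall>x\<in>U. \<exists>!r. r \<in> R \<and> (\<exists>g\<in>carrier G. x = \<alpha> g r)"
    using gset_orbit_transversal[OF U] by (elim exE conjE)
  have closed: "\<alpha> g x \<in> U" if "g \<in> carrier G" "x \<in> U" for g x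
    using U that by (simp add: gset_def)
  have "finite R" using \<open>R \<subseteq> U\<close> U finite_subset by (auto simp: gset_def)
  then obtain e where e: "bij_betw e {0..<card R} R" using ex_bij_betw_nat_finite by blast
  then have e_R: "e i \<in> R" if "i < card R" for i
    using that by (auto simp: bij_betw_def)
  have e_U: "e i \<in> U" if "i < card R" for i
    using e_R[OF that] \<open>R \<subseteq> U\<close> by blast
  define F where "F = (\<lambda>(i, g). \<alpha> g (e i))"
  have "inj_on F (reg_copies G (card R))"
  proof (rule inj_onI, clarsimp simp: reg_copies_def F_def)
    fix i g j h assume i: "i < card R" and g: "g \<in> carrier G" and j: "j < card R" and h: "h \<in> carrier G"
      and eq: "\<alpha> g (e i) = \<alpha> h (e j)"
    have ex1: "\<exists>!r. r \<in> R \<and> (\<exists>g'\<in>carrier G. \<alpha> g (e i) = \<alpha> g' r)"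
      using transversal closed[OF g e_U[OF i]] by (rule bspec)
    have "(THE r. r \<in> R \<and> (\<exists>g'\<in>carrier G. \<alpha> g (e i) = \<alpha> g' r)) = e i"
      by (rule the1_equality[OF ex1]) (use e_R[OF i] g in blast)
    moreover have "(THE r. r \<in> R \<and> (\<exists>g'\<in>carrier G. \<alpha> g (e i) = \<alpha> g' r)) = e j"
      by (rule the1_equality[OF ex1]) (use e_R[OF j] h eq in blast)
    ultimately have "e i = e j" by simp
    then have "i = j" using e i j by (auto simp: bij_betw_def inj_on_def)
    then show "i = j \<and> g = h"
      using free_action_cancel[OF U free e_U[OF i] g h] eq by simp
  qed
  moreover have "F ` reg_copies G (card R) = U"
  proof
    show "F ` reg_copies G (card R) \<subseteq> U"
      by (auto simp: reg_copies_def F_def intro!: closed e_U)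
    show "U \<subseteq> F ` reg_copies G (card R)"
    proof
      fix x assume "x \<in> U"
      then obtain r g where "r \<in> R" "g \<in> carrier G" "x = \<alpha> g r"
        using ex1_implies_ex[OF bspec[OF transversal]] by blast
      moreover obtain i where "i < card R" "r = e i"
        using bij_betw_imp_surj_on[OF e] \<open>r \<in> R\<close> by (metis atLeastLessThan_iff imageE)
      ultimately show "x \<in> F ` reg_copies G (card R)"
        by (auto simp: F_def reg_copies_def intro!: image_eqI[where x = "(i, g)"])
    qed
  qed
  moreover have "F (reg_act G g u) = \<alpha> g (F u)" if "g \<in> carrier G" "u \<in> reg_copies G (card R)" for g u
    using that e_U U by (auto simp: F_def reg_act_def reg_copies_def gset_def)
  ultimately show ?thesis
    unfolding gset_iso_def bij_betw_def by blast
qed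

lemma (in group) gset_iso_sum_reg_copies_imp_free:
  assumes U: "gset G U \<alpha>" and W: "gset G W \<zeta>"
    and iso: "gset_iso G (sum_set U W) (sum_act \<alpha> \<zeta>) (sum_set (reg_copies G n) W) (sum_act (reg_act G) \<zeta>)"
  shows "free_action G U \<alpha>"
proof -
  have "invariants U \<alpha> g = {}" if g: "g \<in> carrier G" "g \<noteq> \<one>" for g
  proof -
    \<comment> \<open>Count the points fixed by g on both sides; the regular copies contribute none.\<close>
    have "card (invariants (sum_set U W) (sum_act \<alpha> \<zeta>) g)
        = card (invariants (sum_set (reg_copies G n) W) (sum_act (reg_act G) \<zeta>) g)"
      using gset_iso_card_invariants[OF gset_sum[OF U W] iso g(1)] .
    moreover have "finite (invariants U \<alpha> g)" "finite (invariants W \<zeta> g)"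
      using U W by (simp_all add: invariants_def gset_def)
    ultimately have "card (invariants U \<alpha> g) + card (invariants W \<zeta> g) = card (invariants W \<zeta> g)"
      by (simp add: invariants_sum_set invariants_reg_copies[OF g] card_Plus)
    then show ?thesis
      using \<open>finite (invariants U \<alpha> g)\<close> by simp
  qed
  then show ?thesis
    by (auto simp: free_action_def invariants_def)
qed

lemma (in group) burnside_eq_mult_reg_imp:
  fixes U :: "'x set"
  assumes fin: "finite (carrier G)" and U: "gset G U \<alpha>" and eq: "burnside_eq_mult_reg G U \<alpha> m"
  shows "0 \<le> m \<and> card U = nat m * order G \<and> free_action G U \<alpha>"
proof -
  have order_pos: "0 < order G" using fin by (simp add: order_gt_0_iff_finite)
  obtain W :: "(nat \<times> 'a set) set" and \<zeta> where W: "gset G W \<zeta>" and iso: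
    "if 0 \<le> m then gset_iso G (sum_set U W) (sum_act \<alpha> \<zeta>) (sum_set (reg_copies G (nat m)) W) (sum_act (reg_act G) \<zeta>)
     else gset_iso G (sum_set (sum_set U (reg_copies G (nat (- m)))) W) (sum_act (sum_act \<alpha> (reg_act G)) \<zeta>) W \<zeta>"
    using eq unfolding burnside_eq_mult_reg_def by blast
  have finite: "finite U" "finite W" "finite (reg_copies G n)" for n
    using U W fin by (auto simp: gset_def reg_copies_def)
  have "0 \<le> m"
  proof (rule ccontr)
    assume "\<not> 0 \<le> m"
    then obtain f where "bij_betw f (sum_set (sum_set U (reg_copies G (nat (- m)))) W) W"
      using iso unfolding gset_iso_def by auto
    then have "card (sum_set (sum_set U (reg_copies G (nat (- m)))) W) = card W"
      by (rule bij_betw_same_card)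
    then have "card U + nat (- m) * order G + card W = card W"
      using finite by (simp add: sum_set_eq_Plus card_Plus card_reg_copies)
    then show False using \<open>\<not> 0 \<le> m\<close> order_pos by simp
  qed
  then have iso: "gset_iso G (sum_set U W) (sum_act \<alpha> \<zeta>) (sum_set (reg_copies G (nat m)) W) (sum_act (reg_act G) \<zeta>)"
    using iso by simp
  then obtain f where "bij_betw f (sum_set U W) (sum_set (reg_copies G (nat m)) W)"
    unfolding gset_iso_def by blast
  then have "card (sum_set U W) = card (sum_set (reg_copies G (nat m)) W)"
    by (rule bij_betw_same_card)
  then have "card U = nat m * order G"
    using finite by (simp add: sum_set_eq_Plus card_Plus card_reg_copies)
  then show ?thesis
    using \<open>0 \<le> m\<close> gset_iso_sum_reg_copies_imp_free[OF U W iso] by blast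
qed

lemma (in group) burnside_eq_mult_reg_iff:
  fixes U :: "'x set"
  assumes fin: "finite (carrier G)" and U: "gset G U \<alpha>"
  shows "burnside_eq_mult_reg G U \<alpha> m \<longleftrightarrow> free_action G U \<alpha> \<and> 0 \<le> m \<and> card U = nat m * order G"
proof
  assume "burnside_eq_mult_reg G U \<alpha> m"
  then show "free_action G U \<alpha> \<and> 0 \<le> m \<and> card U = nat m * order G"
    using burnside_eq_mult_reg_imp[OF fin U] by blast
next
  assume m: "free_action G U \<alpha> \<and> 0 \<le> m \<and> card U = nat m * order G"
  then obtain k where iso: "gset_iso G (reg_copies G k) (reg_act G) U \<alpha>"
    using free_gset_iso_reg_copies[OF U] by blast
  then have "k * order G = nat m * order G"
    using m by (metis bij_betw_same_card card_reg_copies gset_iso_def)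
  moreover have "0 < order G"
    using fin by (simp add: order_gt_0_iff_finite)
  ultimately have "k = nat m" by simp
  then have "gset_iso G U \<alpha> (reg_copies G (nat m)) (reg_act G)"
    using gset_iso_sym[OF gset_reg_copies[OF fin] iso] by simp
  then have "gset_iso G (sum_set U ({} :: (nat \<times> 'a set) set)) (sum_act \<alpha> (\<lambda>_ w. w))
      (sum_set (reg_copies G (nat m)) ({} :: (nat \<times> 'a set) set)) (sum_act (reg_act G) (\<lambda>_ w. w))"
    by (rule gset_iso_sum_set)
  moreover have "gset G ({} :: (nat \<times> 'a set) set) (\<lambda>_ w. w)"
    by (simp add: gset_def)
  ultimately show "burnside_eq_mult_reg G U \<alpha> m"
    unfolding burnside_eq_mult_reg_def using m by auto
qed

section \<open>Products of coset spaces\<close>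

lemma coset_space_eq_lcosets: "coset_space G H = lcosets\<^bsub>G\<^esub> H"
  by (auto simp: coset_space_def LCOSETS_def)

lemma (in group) card_coset_space:
  assumes "finite (carrier G)" and "subgroup H G"
  shows "card (coset_space G H) * card H = order G"
  using l_lagrange[OF assms] by (simp add: coset_space_eq_lcosets)

lemma card_subgroup_pos:
  assumes "finite (carrier G)" and "subgroup H G"
  shows "0 < card H"
  using assms by (metis card_gt_0_iff empty_iff finite_subset subgroup.one_closed subgroup.subset)

lemma (in group) gset_coset_space:
  assumes fin: "finite (carrier G)" and H: "subgroup H G"
  shows "gset G (coset_space G H) (coset_act G)"
  using fin subgroup.subset[OF H]
  by (auto simp: gset_def coset_space_def coset_act_def lcos_m_assoc lcos_mult_one
      l_coset_subset_G setcompr_eq_image m_assoc)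

lemma (in group) lcoset_fixed_iff:
  assumes H: "subgroup H G" and a: "a \<in> carrier G" and g: "g \<in> carrier G"
  shows "g <# (a <# H) = a <# H \<longleftrightarrow> inv a \<otimes> g \<otimes> a \<in> H"
proof -
  have "g <# (a <# H) = (g \<otimes> a) <# H"
    using H a g by (simp add: lcos_m_assoc subgroup.subset)
  moreover have "(g \<otimes> a) <# H = a <# H \<longleftrightarrow> inv a \<otimes> (g \<otimes> a) \<in> H"
  proof
    assume "(g \<otimes> a) <# H = a <# H"
    then have "g \<otimes> a \<in> a <# H" using H a g lcos_self by blast
    then show "inv a \<otimes> (g \<otimes> a) \<in> H" using H a by (simp add: subgroup.lcos_module_imp is_group)
  next
    assume "inv a \<otimes> (g \<otimes> a) \<in> H"
    then have "g \<otimes> a \<in> a <# H" using H a g by (simp add: subgroup.lcos_module_rev is_group)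
    then show "(g \<otimes> a) <# H = a <# H" using H a by (metis l_repr_independence)
  qed
  ultimately show ?thesis
    using a g by (simp add: m_assoc)
qed

lemma (in group) free_action_coset_product_iff:
  assumes H: "subgroup H G" and N: "N \<lhd> G"
  shows "free_action G (coset_space G H \<times> coset_space G N) (prod_act (coset_act G) (coset_act G))
    \<longleftrightarrow> H \<inter> N = {\<one>}"
proof -
  interpret normal N G by (rule N)
  have N_subgroup: "subgroup N G" by (rule normal_imp_subgroup[OF N])
  have fixed_iff: "prod_act (coset_act G) (coset_act G) g (a <# H, b <# N) = (a <# H, b <# N)
      \<longleftrightarrow> inv a \<otimes> g \<otimes> a \<in> H \<and> inv b \<otimes> g \<otimes> b \<in> N"
    if "a \<in> carrier G" "b \<in> carrier G" "g \<in> carrier G" for a b g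
    using lcoset_fixed_iff[OF H] lcoset_fixed_iff[OF N_subgroup] that
    by (simp add: prod_act_def coset_act_def)
  show ?thesis
  proof
    assume free: "free_action G (coset_space G H \<times> coset_space G N) (prod_act (coset_act G) (coset_act G))"
    have "g = \<one>" if "g \<in> H \<inter> N" for g
    proof -
      have g: "g \<in> carrier G" using that H by (auto dest: subgroup.mem_carrier)
      have "(\<one> <# H, \<one> <# N) \<in> coset_space G H \<times> coset_space G N"
        by (auto simp: coset_space_def)
      moreover have "prod_act (coset_act G) (coset_act G) g (\<one> <# H, \<one> <# N) = (\<one> <# H, \<one> <# N)"
        using fixed_iff[of \<one> \<one> g] g that by simp
      ultimately show ?thesis
        using free g unfolding free_action_def by blast
    qed
    then show "H \<inter> N = {\<one>}"
      using subgroup.one_closed[OF H] subgroup.one_closed[OF N_subgroup] by blast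
  next
    assume trivial: "H \<inter> N = {\<one>}"
    show "free_action G (coset_space G H \<times> coset_space G N) (prod_act (coset_act G) (coset_act G))"
      unfolding free_action_def
    proof (clarsimp simp: coset_space_def)
      fix g a b assume g: "g \<in> carrier G" and a: "a \<in> carrier G" and b: "b \<in> carrier G"
        and fixed: "prod_act (coset_act G) (coset_act G) g (a <# H, b <# N) = (a <# H, b <# N)"
      then have "inv b \<otimes> g \<otimes> b \<in> N" using fixed_iff by blast
      then have "g \<in> N" using inv_op_closed2[OF b] conjugation_is_surj[OF b g] by metis
      then have "inv a \<otimes> g \<otimes> a \<in> H \<inter> N" using fixed_iff[OF a b g] fixed a inv_op_closed1 by auto
      then have "inv a \<otimes> g \<otimes> a = \<one>" using trivial by blast
      then show "g = \<one>" using a g by (metis conjugation_is_surj inv_closed one_closed r_inv r_one)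
    qed
  qed
qed

lemma (in group) burnside_coset_product_iff:
  assumes fin: "finite (carrier G)" and H: "subgroup H G" and N: "N \<lhd> G"
  shows "burnside_eq_mult_reg G (coset_space G H \<times> coset_space G N) (prod_act (coset_act G) (coset_act G)) m
    \<longleftrightarrow> H \<inter> N = {\<one>} \<and> 0 \<le> m \<and> nat m * card H * card N = order G"
proof -
  have N_subgroup: "subgroup N G" by (rule normal_imp_subgroup[OF N])
  let ?U = "coset_space G H \<times> coset_space G N"
  have U: "gset G ?U (prod_act (coset_act G) (coset_act G))"
    using gset_prod gset_coset_space[OF fin H] gset_coset_space[OF fin N_subgroup] by blast
  have card_U: "card ?U * (card H * card N) = order G * order G"
    using card_coset_space[OF fin H] card_coset_space[OF fin N_subgroup]
    by (simp add: card_cartesian_product ac_simps)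
  have pos: "0 < order G" "0 < card H * card N"
    using card_subgroup_pos[OF fin] H N_subgroup fin by (simp_all add: order_gt_0_iff_finite)
  have "card ?U = nat m * order G
      \<longleftrightarrow> card ?U * (card H * card N) = nat m * order G * (card H * card N)"
    using pos(2) by (simp only: mult_right_cancel neq0_conv)
  also have "\<dots> \<longleftrightarrow> order G * order G = (nat m * card H * card N) * order G"
    unfolding card_U by (simp add: ac_simps)
  also have "\<dots> \<longleftrightarrow> nat m * card H * card N = order G"
    using pos by auto
  finally show ?thesis
    using burnside_eq_mult_reg_iff[OF fin U] free_action_coset_product_iff[OF H N] by blast
qed

lemma (in group) burnside_coset_product_exists:
  assumes fin: "finite (carrier G)" and H: "subgroup H G" and N: "N \<lhd> G" and trivial: "H \<inter> N = {\<one>}"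
  shows "\<exists>m. burnside_eq_mult_reg G (coset_space G H \<times> coset_space G N) (prod_act (coset_act G) (coset_act G)) m"
proof -
  have N_subgroup: "subgroup N G" by (rule normal_imp_subgroup[OF N])
  let ?U = "coset_space G H \<times> coset_space G N"
  have U: "gset G ?U (prod_act (coset_act G) (coset_act G))"
    using gset_prod gset_coset_space[OF fin H] gset_coset_space[OF fin N_subgroup] by blast
  have free: "free_action G ?U (prod_act (coset_act G) (coset_act G))"
    using free_action_coset_product_iff[OF H N] trivial by blast
  then obtain k where "gset_iso G (reg_copies G k) (reg_act G) ?U (prod_act (coset_act G) (coset_act G))"
    using free_gset_iso_reg_copies[OF U] by blast
  then have "card ?U = nat (int k) * order G"
    by (metis bij_betw_same_card card_reg_copies gset_iso_def nat_int)
  then show ?thesis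
    using burnside_eq_mult_reg_iff[OF fin U] free by (metis of_nat_0_le_iff)
qed

lemma (in group) mem_Ind_of_coset_space_iff:
  assumes fin: "finite (carrier G)" and N: "N \<lhd> G" and Hs: "conj_class_reps G Hs"
  shows "m \<in> Ind_of G Hs (coset_space G N) (coset_act G)
    \<longleftrightarrow> (\<exists>H\<in>Hs. H \<inter> N = {\<one>} \<and> 0 \<le> m \<and> nat m * card H * card N = order G)"
proof -
  have "m \<in> Ind_of G Hs (coset_space G N) (coset_act G) \<longleftrightarrow>
      (\<exists>H\<in>Hs. burnside_eq_mult_reg G (coset_space G H \<times> coset_space G N) (prod_act (coset_act G) (coset_act G)) m)"
    unfolding Ind_of_def S_of_def by blast
  also have "\<dots> \<longleftrightarrow> (\<exists>H\<in>Hs. H \<inter> N = {\<one>} \<and> 0 \<le> m \<and> nat m * card H * card N = order G)"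
    using Hs burnside_coset_product_iff[OF fin _ N] by (intro bex_cong refl) (simp add: conj_class_reps_def)
  finally show ?thesis .
qed

section \<open>Sylow subgroups\<close>

lemma not_dvd_cofactor_iff:
  fixes p k d n :: nat
  assumes p: "Factorial_Ring.prime p" and n: "n \<noteq> 0" and n_eq: "k * d = n"
  shows "\<not> p dvd k \<longleftrightarrow> p ^ multiplicity p n dvd d"
proof
  assume "\<not> p dvd k"
  moreover have "p ^ multiplicity p n dvd k * d" using n_eq multiplicity_dvd by simp
  ultimately show "p ^ multiplicity p n dvd d"
    using p by (cases "multiplicity p n = 0") (auto intro: prime_power_dvd_multD)
next
  assume d: "p ^ multiplicity p n dvd d"
  show "\<not> p dvd k"
  proof
    assume "p dvd k"
    then have "p ^ Suc (multiplicity p n) dvd n"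
      using d n_eq by (metis mult_dvd_mono power_Suc)
    then show False
      using n p by (subst (asm) power_dvd_iff_le_multiplicity) (auto dest: not_prime_unit)
  qed
qed

lemma prime_power_dvd_mult_le:
  fixes p a b e :: nat
  assumes p: "Factorial_Ring.prime p" and a: "a \<noteq> 0" and b: "b \<noteq> 0" and dvd: "p ^ e dvd a * b"
  shows "p ^ e \<le> p ^ multiplicity p a * p ^ multiplicity p b"
proof -
  have "p \<noteq> 1" using prime_gt_1_nat[OF p] by simp
  then have "e \<le> multiplicity p (a * b)"
    using multiplicity_geI[OF _ _ dvd] a b by simp
  also have "\<dots> = multiplicity p a + multiplicity p b"
    using a b p by (simp add: prime_elem_multiplicity_mult_distrib prime_imp_prime_elem)
  finally show ?thesis
    using prime_gt_0_nat[OF p] by (simp add: power_add[symmetric] power_increasing)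
qed

lemma (in group) pgroup_gset_fixed_point:
  fixes U :: "'x set"
  assumes p: "Factorial_Ring.prime p" and order: "order G = p ^ k"
    and U: "gset G U \<alpha>" and not_dvd: "\<not> p dvd card U"
  shows "\<exists>x\<in>U. \<forall>g\<in>carrier G. \<alpha> g x = x"
proof (rule ccontr)
  assume no_fixed: "\<not> (\<exists>x\<in>U. \<forall>g\<in>carrier G. \<alpha> g x = x)"
  define \<phi> where "\<phi> g = restrict (\<alpha> g) U" for g
  interpret group_action G U \<phi>
    unfolding \<phi>_def by (rule gset_group_action[OF U])
  have "p dvd card C" if C: "C \<in> orbits G U \<phi>" for C
  proof -
    obtain x where x: "x \<in> U" and C_eq: "C = orbit G \<phi> x"
      using C by (auto simp: orbits_def)
    have "card C dvd p ^ k"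
      using orbit_stabilizer_theorem[OF x] order C_eq by (metis dvd_triv_left)
    then obtain i where i: "card C = p ^ i"
      using divides_primepow_nat[OF p] by blast
    have "i \<noteq> 0"
    proof
      assume "i = 0"
      then have "C = {x}"
        using i orbit_refl[OF x] C_eq by (metis card_1_singletonE power_0 singletonD)
      then have "\<forall>g\<in>carrier G. \<alpha> g x = x"
        using x C_eq by (auto simp: orbit_def \<phi>_def)
      then show False using no_fixed x by blast
    qed
    then show ?thesis using i by simp
  qed
  moreover have "(\<Sum>C\<in>orbits G U \<phi>. \<Sum>x\<in>C. 1) = (\<Sum>x\<in>U. 1::nat)"
    using U by (intro disjoint_sum) (simp add: gset_def)
  then have "card U = (\<Sum>C\<in>orbits G U \<phi>. card C)"
    by simp
  ultimately show False
    using not_dvd by (simp add: dvd_sum)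
qed

lemma (in group) sylow_subgroup_exists:
  assumes "finite (carrier G)" and "Factorial_Ring.prime p"
  shows "\<exists>P. sylow_subgroup G p P"
proof -
  have "order G = p ^ multiplicity p (order G) * (order G div p ^ multiplicity p (order G))"
    by (simp add: multiplicity_dvd)
  then show ?thesis
    using sylow_thm[OF assms(2) is_group _ assms(1)] by (auto simp: sylow_subgroup_def)
qed

lemma (in group) exists_sylow_of_subgroup:
  assumes fin: "finite (carrier G)" and p: "Factorial_Ring.prime p" and H: "subgroup H G"
  shows "\<exists>Q. subgroup Q G \<and> Q \<subseteq> H \<and> card Q = p ^ multiplicity p (card H)"
proof -
  interpret H: group "G\<lparr>carrier := H\<rparr>"
    by (rule subgroup.subgroup_is_group[OF H is_group])
  have "finite (carrier (G\<lparr>carrier := H\<rparr>))"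
    using finite_subset[OF subgroup.subset[OF H] fin] by simp
  then obtain Q where "sylow_subgroup (G\<lparr>carrier := H\<rparr>) p Q"
    using H.sylow_subgroup_exists[OF _ p] by blast
  then show ?thesis
    using incl_subgroup[OF H] subgroup.subset by (fastforce simp: sylow_subgroup_def order_def)
qed

lemma (in group) sylow_subgroup_index_not_dvd:
  assumes fin: "finite (carrier G)" and p: "Factorial_Ring.prime p" and P: "sylow_subgroup G p P"
  shows "\<not> p dvd card (coset_space G P)"
proof -
  have "subgroup P G" and card_P: "card P = p ^ multiplicity p (order G)"
    using P by (auto simp: sylow_subgroup_def)
  then have "card (coset_space G P) * card P = order G"
    using card_coset_space[OF fin] by blast
  moreover have "order G \<noteq> 0"
    using fin by (simp add: order_gt_0_iff_finite)
  ultimately show ?thesis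
    using not_dvd_cofactor_iff[OF p] card_P by simp
qed

lemma conj_eq_image: "g <#\<^bsub>G\<^esub> A #>\<^bsub>G\<^esub> h = (\<lambda>a. g \<otimes>\<^bsub>G\<^esub> a \<otimes>\<^bsub>G\<^esub> h) ` A"
  by (auto simp: l_coset_def r_coset_def)

lemma (in group) conj_subset_sylow_subgroup:
  assumes fin: "finite (carrier G)" and p: "Factorial_Ring.prime p" and P: "sylow_subgroup G p P"
    and Q: "subgroup Q G" and card_Q: "card Q = p ^ k"
  shows "\<exists>g\<in>carrier G. g <# Q #> inv g \<subseteq> P"
proof -
  have P_subgroup: "subgroup P G" using P by (simp add: sylow_subgroup_def)
  interpret Q: group "G\<lparr>carrier := Q\<rparr>"
    by (rule subgroup.subgroup_is_group[OF Q is_group])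
  \<comment> \<open>Q acts on G/P, whose size is prime to p, so it fixes some coset aP.\<close>
  have "\<exists>C\<in>coset_space G P. \<forall>q\<in>carrier (G\<lparr>carrier := Q\<rparr>). coset_act G q C = C"
    using card_Q sylow_subgroup_index_not_dvd[OF fin p P]
    by (intro Q.pgroup_gset_fixed_point[OF p _ gset_subgroup[OF gset_coset_space[OF fin P_subgroup] Q]])
      (simp_all add: order_def)
  then obtain a where a: "a \<in> carrier G" and fixed: "\<And>q. q \<in> Q \<Longrightarrow> q <# (a <# P) = a <# P"
    by (auto simp: coset_space_def coset_act_def)
  have "inv a \<otimes> q \<otimes> a \<in> P" if "q \<in> Q" for q
    using lcoset_fixed_iff[OF P_subgroup a] fixed[OF that] that subgroup.mem_carrier[OF Q] by blast
  then have "inv a <# Q #> inv (inv a) \<subseteq> P"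
    using a by (auto simp: conj_eq_image)
  then show ?thesis
    using a by blast
qed

section \<open>Complements in Sylow subgroups\<close>

lemma (in group) card_conj:
  assumes "A \<subseteq> carrier G" and "g \<in> carrier G"
  shows "card (g <# A #> inv g) = card A"
proof -
  have "inj_on (\<lambda>a. g \<otimes> a \<otimes> inv g) A"
    using assms by (intro inj_onI) (meson conjugation_is_inj subsetD)
  then show ?thesis by (simp add: conj_eq_image card_image)
qed

lemma (in group) conj_Int_normal:
  assumes N: "N \<lhd> G" and A: "A \<subseteq> carrier G" and g: "g \<in> carrier G"
  shows "(g <# A #> inv g) \<inter> N = g <# (A \<inter> N) #> inv g"
proof -
  interpret normal N G by (rule N)
  have "g \<otimes> a \<otimes> inv g \<in> N \<longleftrightarrow> a \<in> N" if "a \<in> A" for a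
  proof
    have a: "a \<in> carrier G" using A that by blast
    assume "g \<otimes> a \<otimes> inv g \<in> N"
    then have "inv g \<otimes> (g \<otimes> a \<otimes> inv g) \<otimes> g \<in> N"
      using inv_op_closed1[OF g] by blast
    then show "a \<in> N"
      using conjugation_is_surj[OF inv_closed[OF g] a] g by simp
  qed (rule inv_op_closed2[OF g])
  then show ?thesis
    unfolding conj_eq_image by blast
qed

lemma (in group) conj_Int_normal_eq_one_iff:
  assumes N: "N \<lhd> G" and H: "subgroup H G" and g: "g \<in> carrier G"
  shows "(g <# H #> inv g) \<inter> N = {\<one>} \<longleftrightarrow> H \<inter> N = {\<one>}"
proof -
  have H_carrier: "H \<subseteq> carrier G" using H by (rule subgroup.subset)
  have one: "\<one> \<in> H \<inter> N"
    using subgroup.one_closed[OF H] subgroup.one_closed[OF normal_imp_subgroup[OF N]] by blast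
  have conj: "(g <# H #> inv g) \<inter> N = g <# (H \<inter> N) #> inv g"
    using conj_Int_normal[OF N H_carrier g] .
  show ?thesis
  proof
    assume "(g <# H #> inv g) \<inter> N = {\<one>}"
    then have "card (H \<inter> N) = 1"
      using conj card_conj[of "H \<inter> N" g] H_carrier g by (simp add: le_infI1)
    then obtain x where "H \<inter> N = {x}"
      by (auto simp: card_1_singleton_iff)
    then show "H \<inter> N = {\<one>}"
      using one by auto
  next
    assume "H \<inter> N = {\<one>}"
    then show "(g <# H #> inv g) \<inter> N = {\<one>}"
      using conj g by (simp add: conj_eq_image)
  qed
qed

lemma (in group) card_set_mult_Int_trivial:
  assumes A: "subgroup A G" and B: "subgroup B G" and trivial: "A \<inter> B = {\<one>}"
  shows "card (A <#> B) = card A * card B"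
proof -
  have "A <#> B = (\<lambda>(a, b). a \<otimes> b) ` (A \<times> B)"
    by (auto simp: set_mult_def)
  moreover have "inj_on (\<lambda>(a, b). a \<otimes> b) (A \<times> B)"
  proof (rule inj_onI, clarify)
    fix a b a' b' assume a: "a \<in> A" "a' \<in> A" and b: "b \<in> B" "b' \<in> B" and eq: "a \<otimes> b = a' \<otimes> b'"
    have carrier: "a \<in> carrier G" "a' \<in> carrier G" "b \<in> carrier G" "b' \<in> carrier G"
      using a b A B by (auto dest: subgroup.mem_carrier)
    have "inv a' \<otimes> a = inv a' \<otimes> (a \<otimes> b) \<otimes> inv b"
      using carrier by (simp add: m_assoc)
    also have "\<dots> = b' \<otimes> inv b"
      using carrier eq by (simp add: m_assoc[symmetric])
    finally have "inv a' \<otimes> a = b' \<otimes> inv b" .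
    moreover have "inv a' \<otimes> a \<in> A" "b' \<otimes> inv b \<in> B"
      using a b A B by (auto intro: subgroup.m_closed subgroup.m_inv_closed)
    ultimately have "inv a' \<otimes> a = \<one>" using trivial by auto
    then have "a = a'" using carrier inv_solve_left[of \<one> a' a] by simp
    then show "a = a' \<and> b = b'" using eq carrier by simp
  qed
  ultimately show ?thesis
    by (simp add: card_image card_cartesian_product)
qed

lemma (in group) card_subgroup_dvd:
  assumes "subgroup A G" and "subgroup B G" and "A \<subseteq> B"
  shows "card A dvd card B"
proof -
  interpret B: group "G\<lparr>carrier := B\<rparr>"
    by (rule subgroup.subgroup_is_group[OF assms(2) is_group])
  have "card (rcosets\<^bsub>G\<lparr>carrier := B\<rparr>\<^esub> A) * card A = order (G\<lparr>carrier := B\<rparr>)"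
    by (rule B.lagrange) (rule subgroup_incl[OF assms])
  then show ?thesis
    by (metis dvd_triv_right order_def partial_object.select_convs(1) partial_object.surjective
        partial_object.update_convs(1))
qed

lemma (in group) has_complement_of_card_le:
  assumes fin: "finite (carrier G)" and A: "subgroup A G" and K: "subgroup K G" and P: "subgroup P G"
    and "A \<subseteq> P" and "K \<subseteq> P" and trivial: "K \<inter> A = {\<one>}" and le: "card P \<le> card A * card K"
  shows "has_complement G A P"
proof -
  have "A <#> K \<subseteq> P"
    using assms(5,6) P by (auto simp: set_mult_def intro: subgroup.m_closed)
  moreover have "card P \<le> card (A <#> K)"
    using le card_set_mult_Int_trivial[OF A K] trivial by (simp add: Int_commute)
  moreover have "finite P"
    using finite_subset[OF subgroup.subset[OF P] fin] .
  ultimately have "A <#> K = P"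
    using card_seteq by blast
  then show ?thesis
    unfolding has_complement_def using K assms(6) trivial by blast
qed

lemma (in group) has_complement_Int_normal_imp:
  assumes N: "N \<lhd> G" and P: "subgroup P G" and complement: "has_complement G (N \<inter> P) P"
  shows "\<exists>H. subgroup H G \<and> H \<inter> N = {\<one>} \<and> card P dvd card H * card N"
proof -
  have N_subgroup: "subgroup N G" by (rule normal_imp_subgroup[OF N])
  have NP: "subgroup (N \<inter> P) G" by (rule subgroups_Inter_pair[OF N_subgroup P])
  obtain K where K: "subgroup K G" "K \<subseteq> P" "K \<inter> (N \<inter> P) = {\<one>}" "N \<inter> P <#> K = P"
    using complement unfolding has_complement_def by blast
  have "card P = card (N \<inter> P) * card K"
    using card_set_mult_Int_trivial[OF NP K(1)] K(3,4) by (simp add: Int_commute)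
  moreover have "card (N \<inter> P) dvd card N"
    using card_subgroup_dvd[OF NP N_subgroup] by blast
  ultimately have "card P dvd card K * card N"
    by (simp add: mult.commute mult_dvd_mono)
  moreover have "K \<inter> N = {\<one>}" using K(2,3) by blast
  ultimately show ?thesis
    using K(1) by blast
qed

lemma (in group) sylow_has_complement:
  assumes fin: "finite (carrier G)" and N: "N \<lhd> G" and p: "Factorial_Ring.prime p"
    and P: "sylow_subgroup G p P"
    and H: "subgroup H G" and trivial: "H \<inter> N = {\<one>}" and dvd: "card P dvd card H * card N"
  shows "has_complement G (N \<inter> P) P"
proof -
  have N_subgroup: "subgroup N G" by (rule normal_imp_subgroup[OF N])
  have P_subgroup: "subgroup P G" using P by (simp add: sylow_subgroup_def)
  have NP: "subgroup (N \<inter> P) G" by (rule subgroups_Inter_pair[OF N_subgroup P_subgroup])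
  obtain Q where Q: "subgroup Q G" "Q \<subseteq> H" "card Q = p ^ multiplicity p (card H)"
    using exists_sylow_of_subgroup[OF fin p H] by blast
  obtain R where R: "subgroup R G" "R \<subseteq> N" "card R = p ^ multiplicity p (card N)"
    using exists_sylow_of_subgroup[OF fin p N_subgroup] by blast
  obtain g where g: "g \<in> carrier G" "g <# Q #> inv g \<subseteq> P"
    using conj_subset_sylow_subgroup[OF fin p P Q(1,3)] by blast
  obtain h where h: "h \<in> carrier G" "h <# R #> inv h \<subseteq> P"
    using conj_subset_sylow_subgroup[OF fin p P R(1,3)] by blast
  define K where "K = g <# Q #> inv g"
  have "Q \<inter> N = {\<one>}"
    using trivial Q(2) subgroup.one_closed[OF Q(1)] subgroup.one_closed[OF N_subgroup] by blast
  then have "K \<inter> N = {\<one>}"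
    unfolding K_def using conj_Int_normal_eq_one_iff[OF N Q(1) g(1)] by blast
  then have K_trivial: "K \<inter> (N \<inter> P) = {\<one>}"
    using subgroup.one_closed[OF P_subgroup] by blast
  have "h <# R #> inv h \<subseteq> N"
    using conj_Int_normal[OF N subgroup.subset[OF R(1)] h(1)] R(2) by (simp add: Int_absorb2 inf.absorb_iff1)
  then have "card (h <# R #> inv h) \<le> card (N \<inter> P)"
    using h(2) finite_subset[OF subgroup.subset[OF P_subgroup] fin] by (intro card_mono) auto
  then have card_R: "card R \<le> card (N \<inter> P)"
    by (simp add: card_conj[OF subgroup.subset[OF R(1)] h(1)])
  have card_K: "card K = card Q"
    unfolding K_def by (rule card_conj[OF subgroup.subset[OF Q(1)] g(1)])
  have "p ^ multiplicity p (order G) dvd card H * card N"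
    using dvd P by (simp add: sylow_subgroup_def)
  then have "card P \<le> card Q * card R"
    using prime_power_dvd_mult_le[OF p] P Q(3) R(3) card_subgroup_pos[OF fin] H N_subgroup
    by (simp add: sylow_subgroup_def)
  also have "\<dots> \<le> card (N \<inter> P) * card K"
    using card_R card_K by simp
  finally show ?thesis
    using has_complement_of_card_le[OF fin NP _ P_subgroup _ _ K_trivial] g(2)
      subgroup_conjugation_is_surj2[OF g(1) Q(1)]
    by (simp add: K_def)
qed

lemma (in group) sylow_has_complement_iff:
  assumes fin: "finite (carrier G)" and N: "N \<lhd> G" and p: "Factorial_Ring.prime p"
    and P: "sylow_subgroup G p P"
  shows "has_complement G (N \<inter> P) P \<longleftrightarrow> (\<exists>H. subgroup H G \<and> H \<inter> N = {\<one>} \<and> card P dvd card H * card N)"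
proof -
  have "subgroup P G" using P by (simp add: sylow_subgroup_def)
  then show ?thesis
    using has_complement_Int_normal_imp[OF N] sylow_has_complement[OF fin N p P] by blast
qed

section \<open>The index set of G/N\<close>

lemma (in group) sylow_not_dvd_cofactor_iff:
  assumes fin: "finite (carrier G)" and p: "Factorial_Ring.prime p" and P: "sylow_subgroup G p P"
    and m: "0 \<le> m" and order: "nat m * card H * card N = order G"
  shows "\<not> int p dvd m \<longleftrightarrow> card P dvd card H * card N"
proof -
  have "int p dvd m \<longleftrightarrow> p dvd nat m"
    using m by (metis int_dvd_int_iff nat_0_le)
  moreover have "order G \<noteq> 0"
    using fin by (simp add: order_gt_0_iff_finite)
  then have "\<not> p dvd nat m \<longleftrightarrow> p ^ multiplicity p (order G) dvd card H * card N"
    using not_dvd_cofactor_iff[OF p, of "order G" "nat m" "card H * card N"] order by (simp add: mult.assoc)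
  ultimately show ?thesis
    using P by (simp add: sylow_subgroup_def)
qed

lemma (in group) conj_class_reps_Int_normal:
  assumes Hs: "conj_class_reps G Hs" and N: "N \<lhd> G" and K: "subgroup K G" and trivial: "K \<inter> N = {\<one>}"
  shows "\<exists>H\<in>Hs. H \<inter> N = {\<one>} \<and> card H = card K"
proof -
  have "\<exists>!H. H \<in> Hs \<and> (\<exists>g\<in>carrier G. K = g <# H #> inv g)"
    using Hs K by (simp add: conj_class_reps_def)
  then obtain H g where H: "H \<in> Hs" and g: "g \<in> carrier G" and K_eq: "K = g <# H #> inv g"
    by (auto dest: ex1_implies_ex)
  have "subgroup H G" using Hs H by (simp add: conj_class_reps_def)
  then show ?thesis
    using H K_eq trivial conj_Int_normal_eq_one_iff[OF N _ g] card_conj[OF subgroup.subset g]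
    by metis
qed

lemma Gcd_int_eq_1_iff:
  fixes A :: "int set"
  shows "Gcd A = 1 \<longleftrightarrow> (\<forall>p::nat. Factorial_Ring.prime p \<longrightarrow> (\<exists>m\<in>A. \<not> int p dvd m))"
proof
  assume gcd: "Gcd A = 1"
  show "\<forall>p::nat. Factorial_Ring.prime p \<longrightarrow> (\<exists>m\<in>A. \<not> int p dvd m)"
  proof (intro allI impI)
    fix p :: nat assume p: "Factorial_Ring.prime p"
    show "\<exists>m\<in>A. \<not> int p dvd m"
    proof (rule ccontr)
      assume "\<not> (\<exists>m\<in>A. \<not> int p dvd m)"
      then have "int p dvd Gcd A" by (auto intro: Gcd_greatest)
      then show False using gcd p by (simp add: prime_gt_1_nat)
    qed
  qed
next
  assume coprime: "\<forall>p::nat. Factorial_Ring.prime p \<longrightarrow> (\<exists>m\<in>A. \<not> int p dvd m)"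
  show "Gcd A = 1"
  proof (rule ccontr)
    assume "Gcd A \<noteq> 1"
    moreover have "Gcd A \<noteq> 0"
    proof -
      obtain m where "m \<in> A" "\<not> int 2 dvd m"
        using coprime two_is_prime_nat by blast
      then show ?thesis using Gcd_dvd[of m A] by auto
    qed
    ultimately have "\<not> is_unit (Gcd A)"
      by (metis is_unit_normalize normalize_Gcd)
    then obtain q :: int where q: "Factorial_Ring.prime q" "q dvd Gcd A"
      using prime_divisor_exists \<open>Gcd A \<noteq> 0\<close> by blast
    then obtain m where "m \<in> A" "\<not> int (nat q) dvd m"
      using coprime prime_int_nat_transfer by blast
    moreover have "q dvd m" using q(2) Gcd_dvd[OF \<open>m \<in> A\<close>] by (rule dvd_trans)
    ultimately show False
      using q(1) by (simp add: prime_ge_0_int)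
  qed
qed

lemma (in group) exists_Ind_not_dvd_iff_sylow_complements:
  assumes fin: "finite (carrier G)" and N: "N \<lhd> G" and Hs: "conj_class_reps G Hs"
    and p: "Factorial_Ring.prime p"
  shows "(\<exists>m\<in>Ind_of G Hs (coset_space G N) (coset_act G). \<not> int p dvd m)
    \<longleftrightarrow> (\<forall>P. sylow_subgroup G p P \<longrightarrow> has_complement G (N \<inter> P) P)"
proof
  assume "\<exists>m\<in>Ind_of G Hs (coset_space G N) (coset_act G). \<not> int p dvd m"
  then obtain m H where H: "H \<in> Hs" "H \<inter> N = {\<one>}" and m: "0 \<le> m" "nat m * card H * card N = order G"
    and not_dvd: "\<not> int p dvd m"
    using mem_Ind_of_coset_space_iff[OF fin N Hs] by blast
  have "subgroup H G" using Hs H(1) by (simp add: conj_class_reps_def)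
  then show "\<forall>P. sylow_subgroup G p P \<longrightarrow> has_complement G (N \<inter> P) P"
    using sylow_has_complement_iff[OF fin N p] sylow_not_dvd_cofactor_iff[OF fin p _ m] H(2) not_dvd
    by blast
next
  assume complements: "\<forall>P. sylow_subgroup G p P \<longrightarrow> has_complement G (N \<inter> P) P"
  obtain P where P: "sylow_subgroup G p P"
    using sylow_subgroup_exists[OF fin p] by blast
  then obtain K where K: "subgroup K G" "K \<inter> N = {\<one>}" "card P dvd card K * card N"
    using complements sylow_has_complement_iff[OF fin N p P] by blast
  then obtain H where H: "H \<in> Hs" "H \<inter> N = {\<one>}" "card H = card K"
    using conj_class_reps_Int_normal[OF Hs N] by blast
  have H_subgroup: "subgroup H G" using Hs H(1) by (simp add: conj_class_reps_def)
  obtain m where "burnside_eq_mult_reg G (coset_space G H \<times> coset_space G N) (prod_act (coset_act G) (coset_act G)) m"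
    using burnside_coset_product_exists[OF fin H_subgroup N H(2)] by blast
  then have m: "0 \<le> m" "nat m * card H * card N = order G"
    using burnside_coset_product_iff[OF fin H_subgroup N] by blast+
  then have "m \<in> Ind_of G Hs (coset_space G N) (coset_act G)"
    using mem_Ind_of_coset_space_iff[OF fin N Hs] H by blast
  moreover have "\<not> int p dvd m"
    using sylow_not_dvd_cofactor_iff[OF fin p P m] K(3) H(3) by simp
  ultimately show "\<exists>m\<in>Ind_of G Hs (coset_space G N) (coset_act G). \<not> int p dvd m"
    by blast
qed

theorem theorem3p9:
  fixes G :: "('a, 'b) monoid_scheme" and N :: "'a set" and Hs :: "'a set set"
  assumes "group G" and "finite (carrier G)" and "N \<lhd> G"
    and "conj_class_reps G Hs"
  shows "K_rS G Hs (coset_space G N) (coset_act G) = Some 1 \<longleftrightarrow>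
         (\<forall>(p::nat) P. Factorial_Ring.prime p \<longrightarrow> sylow_subgroup G p P \<longrightarrow> has_complement G (N \<inter> P) P)"
proof -
  let ?Ind = "Ind_of G Hs (coset_space G N) (coset_act G)"
  have "K_rS G Hs (coset_space G N) (coset_act G) = Some 1 \<longleftrightarrow> Gcd ?Ind = 1"
    by (auto simp: K_rS_def Ind_of_def)
  also have "\<dots> \<longleftrightarrow> (\<forall>p::nat. Factorial_Ring.prime p \<longrightarrow> (\<exists>m\<in>?Ind. \<not> int p dvd m))"
    by (rule Gcd_int_eq_1_iff)
  also have "\<dots> \<longleftrightarrow> (\<forall>(p::nat) P. Factorial_Ring.prime p \<longrightarrow> sylow_subgroup G p P \<longrightarrow> has_complement G (N \<inter> P) P)"
    using group.exists_Ind_not_dvd_iff_sylow_complements[OF assms] by blast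
  finally show ?thesis .
qed

end
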